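(* Let $G$ be a graph of order $n$ with no isolated vertices such that $\gamma_{\rm gr}^t(G)=n$, and let $S=(v_1,\ldots,v_n)$ be a total dominating sequence of $G$ of length $n$. If $x$ and $y$ are vertices of $G$ such that $x$ footprints $y$ with respect to $S$, then $y$ also footprints $x$ with respect to $S$.
   Context: All graphs are finite, simple, without isolated vertices. $N(v)$ denotes the open neighborhood of $v$. A sequence $S=(v_1,\ldots,v_k)$ of distinct vertices of $G$ is a legal (open neighborhood) sequence if $N(v_i)\setminus \bigcup_{j=1}^{i-1} N(v_j)\neq\emptyset$ for every $i\in\{2,\ldots,k\}$; it is a total dominating sequence if moreover $\{v_1,\ldots,v_k\}$ is a total dominating set of $G$ (every vertex has a neighbor in it). For a legal sequence $S$, the vertex $v_i$ footprints every vertex $u \in N(v_i)\setminus \bigcup_{j=1}^{i-1} N(v_j)$. The Grundy total domination number $\gamma_{\rm gr}^t(G)$ is the maximum length of a total dominating sequence of $G$. *)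

theory Defs
  imports Main
begin

definition graph :: "'a set \<Rightarrow> ('a \<Rightarrow> 'a \<Rightarrow> bool) \<Rightarrow> bool" where
  "graph V E \<longleftrightarrow> finite V \<and> (\<forall>u v. E u v \<longrightarrow> u \<in> V \<and> v \<in> V)
     \<and> (\<forall>u v. E u v \<longrightarrow> E v u) \<and> (\<forall>v. \<not> E v v)"

definition no_isolated :: "'a set \<Rightarrow> ('a \<Rightarrow> 'a \<Rightarrow> bool) \<Rightarrow> bool" where
  "no_isolated V E \<longleftrightarrow> (\<forall>v\<in>V. \<exists>u. E v u)"

definition nbhd :: "'a set \<Rightarrow> ('a \<Rightarrow> 'a \<Rightarrow> bool) \<Rightarrow> 'a \<Rightarrow> 'a set" where
  "nbhd V E v = {u \<in> V. E v u}"

definition legal_seq :: "'a set \<Rightarrow> ('a \<Rightarrow> 'a \<Rightarrow> bool) \<Rightarrow> 'a list \<Rightarrow> bool" where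
  "legal_seq V E S \<longleftrightarrow> distinct S \<and> set S \<subseteq> V \<and>
     (\<forall>i. 0 < i \<and> i < length S \<longrightarrow>
        nbhd V E (S ! i) - (\<Union>j<i. nbhd V E (S ! j)) \<noteq> {})"

definition total_dominating_set :: "'a set \<Rightarrow> ('a \<Rightarrow> 'a \<Rightarrow> bool) \<Rightarrow> 'a set \<Rightarrow> bool" where
  "total_dominating_set V E D \<longleftrightarrow> D \<subseteq> V \<and> (\<forall>v\<in>V. \<exists>u\<in>D. E v u)"

definition total_dominating_seq :: "'a set \<Rightarrow> ('a \<Rightarrow> 'a \<Rightarrow> bool) \<Rightarrow> 'a list \<Rightarrow> bool" where
  "total_dominating_seq V E S \<longleftrightarrow> legal_seq V E S \<and> total_dominating_set V E (set S)"

definition grundy_total_dom :: "'a set \<Rightarrow> ('a \<Rightarrow> 'a \<Rightarrow> bool) \<Rightarrow> nat" where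
  "grundy_total_dom V E = Max {length S | S. total_dominating_seq V E S}"

definition footprints :: "'a set \<Rightarrow> ('a \<Rightarrow> 'a \<Rightarrow> bool) \<Rightarrow> 'a list \<Rightarrow> 'a \<Rightarrow> 'a \<Rightarrow> bool" where
  "footprints V E S x u \<longleftrightarrow> (\<exists>i<length S. S ! i = x \<and>
     u \<in> nbhd V E (S ! i) - (\<Union>j<i. nbhd V E (S ! j)))"

end

theory Submission
  imports Defs
begin

text \<open>Let \<open>F i\<close> be the set of vertices footprinted by the \<open>i\<close>-th entry of \<open>S\<close>. These
  sets are pairwise disjoint, nonempty by legality, and by total domination they cover \<open>V\<close>.
  As \<open>S\<close> has \<open>|V|\<close> entries, each \<open>F i\<close> is a single vertex \<open>S ! p i\<close> and \<open>p\<close> permutes the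
  positions. A vertex is footprinted by its neighbour of least position, and \<open>S ! i\<close> is a
  neighbour of \<open>S ! p i\<close>, so \<open>p\<^sup>-\<^sup>1 i \<le> p i\<close> for all \<open>i\<close>. Both sides have the same sum over
  all positions, hence \<open>p\<^sup>-\<^sup>1 = p\<close>: footprinting is an involution.\<close>

lemma card_eq_1_if_disjoint_nonempty_cover:
  assumes "finite I" and "finite (\<Union>i\<in>I. F i)"
    and disjoint: "\<forall>i\<in>I. \<forall>j\<in>I. i \<noteq> j \<longrightarrow> F i \<inter> F j = {}"
    and nonempty: "\<forall>i\<in>I. F i \<noteq> {}"
    and small: "card (\<Union>i\<in>I. F i) \<le> card I"
    and "i \<in> I"
  shows "card (F i) = 1"
proof (rule ccontr)
  assume "card (F i) \<noteq> 1"
  have finite_parts: "\<forall>i\<in>I. finite (F i)"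
    using assms(2) by (meson UN_I finite_subset subsetI)
  then have at_least_1: "\<forall>j\<in>I. 1 \<le> card (F j)"
    using nonempty by (simp add: Suc_le_eq card_gt_0_iff)
  moreover have "1 < card (F i)"
    using at_least_1 \<open>card (F i) \<noteq> 1\<close> \<open>i \<in> I\<close> by fastforce
  ultimately have "(\<Sum>j\<in>I. 1) < (\<Sum>j\<in>I. card (F j))"
    using \<open>i \<in> I\<close> \<open>finite I\<close> by (intro sum_strict_mono_ex1) auto
  also have "\<dots> = card (\<Union>i\<in>I. F i)"
    using \<open>finite I\<close> finite_parts disjoint by (rule card_UN_disjoint[symmetric])
  finally show False
    using small by simp
qed

lemma involution_if_inverse_le:
  fixes p :: "'a \<Rightarrow> 'a::ordered_cancel_comm_monoid_add"
  assumes "finite A" and perm: "bij_betw p A A"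
    and le: "\<forall>a\<in>A. inv_into A p a \<le> p a"
    and "a \<in> A"
  shows "p (p a) = a"
proof -
  have "sum (inv_into A p) A = sum id A"
    using sum.reindex_bij_betw[OF bij_betw_inv_into[OF perm], of id] by simp
  also have "\<dots> = sum p A"
    using sum.reindex_bij_betw[OF perm, of id] by simp
  finally have "inv_into A p a = p a"
    using sum_strict_mono_ex1[OF \<open>finite A\<close> le] le \<open>a \<in> A\<close>
    by (metis order_less_irrefl order_neq_le_trans)
  then show ?thesis
    using perm \<open>a \<in> A\<close> by (metis bij_betw_inv_into_right)
qed

definition footprint_set :: "'a set \<Rightarrow> ('a \<Rightarrow> 'a \<Rightarrow> bool) \<Rightarrow> 'a list \<Rightarrow> nat \<Rightarrow> 'a set" where
  "footprint_set V E S i = nbhd V E (S ! i) - (\<Union>j<i. nbhd V E (S ! j))"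

lemma footprints_iff:
  "footprints V E S x u \<longleftrightarrow> (\<exists>i<length S. S ! i = x \<and> u \<in> footprint_set V E S i)"
  by (simp add: footprints_def footprint_set_def)

lemma footprint_set_subset_nbhd: "footprint_set V E S i \<subseteq> nbhd V E (S ! i)"
  by (simp add: footprint_set_def)

lemma footprint_set_disjoint:
  "i \<noteq> j \<Longrightarrow> footprint_set V E S i \<inter> footprint_set V E S j = {}"
  by (cases i j rule: linorder_cases) (auto simp: footprint_set_def)

lemma footprint_set_index_le:
  "u \<in> footprint_set V E S i \<Longrightarrow> u \<in> nbhd V E (S ! m) \<Longrightarrow> i \<le> m"
  by (auto simp: footprint_set_def not_le)

lemma Union_footprint_set:
  "(\<Union>i<k. footprint_set V E S i) = (\<Union>i<k. nbhd V E (S ! i))"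
  by (induction k) (auto simp: footprint_set_def lessThan_Suc)

locale full_total_dominating_seq =
  fixes V :: "'a set" and E :: "'a \<Rightarrow> 'a \<Rightarrow> bool" and S :: "'a list"
  assumes graph: "graph V E"
    and total_dominating: "total_dominating_seq V E S"
    and length_S: "length S = card V"
begin

lemma finite_V: "finite V" and sym_E: "E u v \<Longrightarrow> E v u"
  using graph by (auto simp: graph_def)

lemma legal: "legal_seq V E S"
  and dominates: "\<forall>v\<in>V. \<exists>u\<in>set S. E v u"
  using total_dominating by (auto simp: total_dominating_seq_def total_dominating_set_def)

lemma set_S: "set S = V"
  using legal length_S finite_V
  by (metis card_subset_eq distinct_card legal_seq_def)

lemma Union_nbhd: "(\<Union>i<length S. nbhd V E (S ! i)) = V"
  using dominates sym_E by (fastforce simp: nbhd_def in_set_conv_nth)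

lemma footprint_set_nonempty:
  assumes "i < length S"
  shows "footprint_set V E S i \<noteq> {}"
proof (cases "i = 0")
  case True
  have "S ! 0 \<in> V"
    using assms set_S nth_mem[of 0 S] by fastforce
  then obtain u where "u \<in> set S" "E (S ! 0) u"
    using dominates by blast
  then show ?thesis
    using True set_S by (auto simp: footprint_set_def nbhd_def)
next
  case False
  then show ?thesis
    using legal assms by (simp add: legal_seq_def footprint_set_def)
qed

lemma card_footprint_set:
  assumes "i < length S"
  shows "card (footprint_set V E S i) = 1"
proof (rule card_eq_1_if_disjoint_nonempty_cover[where I = "{..<length S}" and F = "footprint_set V E S"])
  have "(\<Union>i<length S. footprint_set V E S i) = V"
    by (simp add: Union_footprint_set Union_nbhd)
  then show "finite (\<Union>i<length S. footprint_set V E S i)"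
    and "card (\<Union>i<length S. footprint_set V E S i) \<le> card {..<length S}"
    using finite_V length_S by simp_all
  show "\<forall>i\<in>{..<length S}. \<forall>j\<in>{..<length S}. i \<noteq> j \<longrightarrow>
      footprint_set V E S i \<inter> footprint_set V E S j = {}"
    by (simp add: footprint_set_disjoint)
  show "\<forall>i\<in>{..<length S}. footprint_set V E S i \<noteq> {}"
    by (simp add: footprint_set_nonempty)
qed (simp_all add: assms)

lemma footprint_partner:
  obtains p where "bij_betw p {..<length S} {..<length S}"
    and "\<forall>i<length S. footprint_set V E S i = {S ! p i}"
proof -
  have "\<exists>j. i < length S \<longrightarrow> j < length S \<and> footprint_set V E S i = {S ! j}" for i
  proof (cases "i < length S")
    case True
    obtain u where u: "footprint_set V E S i = {u}"
      using card_footprint_set[OF True] by (rule card_1_singletonE)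
    then have "u \<in> set S"
      using footprint_set_subset_nbhd[of V E S i] set_S by (auto simp: nbhd_def)
    then obtain j where "j < length S" "S ! j = u"
      by (auto simp: in_set_conv_nth)
    with u show ?thesis
      by blast
  qed simp
  then obtain p where p: "\<forall>i<length S. p i < length S \<and> footprint_set V E S i = {S ! p i}"
    using choice[of "\<lambda>i j. i < length S \<longrightarrow> j < length S \<and> footprint_set V E S i = {S ! j}"]
    by blast
  have "inj_on p {..<length S}"
  proof (rule inj_onI)
    fix i j
    assume "i \<in> {..<length S}" "j \<in> {..<length S}" "p i = p j"
    then have "footprint_set V E S i \<inter> footprint_set V E S j \<noteq> {}"
      using p by simp
    then show "i = j"
      using footprint_set_disjoint[of i j V E S] by blast
  qed
  moreover have "p ` {..<length S} \<subseteq> {..<length S}"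
    using p by auto
  ultimately have "bij_betw p {..<length S} {..<length S}"
    by (simp add: bij_betw_def endo_inj_surj)
  with p show thesis
    using that by blast
qed

lemma footprint_partner_involution:
  assumes perm: "bij_betw p {..<length S} {..<length S}"
    and partner: "\<forall>i<length S. footprint_set V E S i = {S ! p i}"
    and "i < length S"
  shows "p (p i) = i"
proof -
  have le: "\<forall>a\<in>{..<length S}. inv_into {..<length S} p a \<le> p a"
  proof
    fix a
    assume a: "a \<in> {..<length S}"
    define q where "q = inv_into {..<length S} p a"
    have "q < length S"
      using bij_betw_apply[OF bij_betw_inv_into[OF perm] a] by (simp add: q_def)
    moreover have "p q = a"
      using bij_betw_inv_into_right[OF perm a] by (simp add: q_def)
    ultimately have "S ! a \<in> footprint_set V E S q"
      using partner by simp
    moreover have "E (S ! a) (S ! p a)"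
      using partner a footprint_set_subset_nbhd by (fastforce simp: nbhd_def)
    then have "S ! a \<in> nbhd V E (S ! p a)"
      using a set_S sym_E by (auto simp: nbhd_def)
    ultimately show "inv_into {..<length S} p a \<le> p a"
      unfolding q_def by (rule footprint_set_index_le)
  qed
  show ?thesis
    using involution_if_inverse_le[OF _ perm le] \<open>i < length S\<close> by simp
qed

end

theorem mainTheorem4:
  fixes V :: "'a set" and E :: "'a \<Rightarrow> 'a \<Rightarrow> bool" and S :: "'a list" and x y :: 'a
  assumes "graph V E"
    and "no_isolated V E"
    and "grundy_total_dom V E = card V"
    and "total_dominating_seq V E S"
    and "length S = card V"
    and "x \<in> V" and "y \<in> V"
    and "footprints V E S x y"
  shows "footprints V E S y x"
proof -
  \<comment> \<open>Only \<open>length S = card V\<close> is needed: the Grundy hypothesis merely says that such an \<open>S\<close>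
    exists, and total domination already excludes isolated vertices.\<close>
  interpret full_total_dominating_seq V E S
    using assms(1,4,5) by unfold_locales
  obtain p where perm: "bij_betw p {..<length S} {..<length S}"
    and partner: "\<forall>i<length S. footprint_set V E S i = {S ! p i}"
    by (rule footprint_partner)
  obtain i where i: "i < length S" "S ! i = x" "y \<in> footprint_set V E S i"
    using assms(8) by (auto simp: footprints_iff)
  then have "p i < length S" and "S ! p i = y"
    using bij_betw_apply[OF perm] partner by auto
  moreover have "x \<in> footprint_set V E S (p i)"
    using partner footprint_partner_involution[OF perm partner i(1)] i(2) \<open>p i < length S\<close> by simp
  ultimately show ?thesis
    unfolding footprints_iff by blast
qed

end
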